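(* Let $p$ be the POP of length 4 defined by the single relation $1>2$ (labels $3,4$ isolated); equivalently, avoiding $p$ means avoiding all 12 patterns of length 4 whose first entry exceeds the second. Let $a(n)=|S_n(p)|$. Then $a(n)=n!$ for $n\in\{0,1,2,3\}$ and $a(n)=n(n-1)$ for $n\geq 4$. Moreover, $$\sum_{n\geq 0}a(n)x^n=\frac{1-2x+2x^2+2x^3-x^4}{(1-x)^3}.$$
   Context: An $n$-permutation is a word $\pi=\pi_1\cdots\pi_n$ containing each of $1,\ldots,n$ exactly once; $S_n$ is the set of $n$-permutations ($S_0$ consists of the empty permutation). A partially ordered pattern (POP) $p$ of length $k$ is a partial order on the label set $\{1,\ldots,k\}$; it is described by a set of generating relations, where a relation $x>y$ means that in an occurrence the entry in the $x$-th chosen position must be larger than the entry in the $y$-th chosen position, and labels not involved in any relation are unconstrained. An $n$-permutation $\pi$ contains $p$ if there are indices $1\leq i_1<\cdots<i_k\leq n$ such that $\pi_{i_x}>\pi_{i_y}$ whenever $x>y$ in the partial order; otherwise $\pi$ avoids $p$. $S_n(p)$ denotes the set of $n$-permutations avoiding $p$. *)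

theory Defs
  imports Complex_Main "HOL-Computational_Algebra.Formal_Power_Series"
begin

definition perms :: "nat \<Rightarrow> nat list set" where
  "perms n = {w. distinct w \<and> set w = {1..n}}"

text \<open>A POP of length k is given by a set R of generating relations (x,y), meaning x > y,
  on labels 1..k. Positions in the word are 1-based: the entry at position i is w ! (i - 1).\<close>
definition contains_pop :: "nat \<Rightarrow> (nat \<times> nat) set \<Rightarrow> nat list \<Rightarrow> bool" where
  "contains_pop k R w \<longleftrightarrow>
     (\<exists>idx :: nat \<Rightarrow> nat.
        strict_mono_on {1..k} idx \<and>
        (\<forall>x\<in>{1..k}. 1 \<le> idx x \<and> idx x \<le> length w) \<and>
        (\<forall>(x, y)\<in>R. w ! (idx x - 1) > w ! (idx y - 1)))"

definition avoiders :: "nat \<Rightarrow> (nat \<times> nat) set \<Rightarrow> nat \<Rightarrow> nat list set" where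
  "avoiders k R n = {w \<in> perms n. \<not> contains_pop k R w}"

end

theory Submission
  imports Defs "HOL-Combinatorics.Multiset_Permutations"
begin

text \<open>An occurrence of the POP of length \<open>m + 2\<close> with the single relation \<open>1 > 2\<close> is an
  inversion whose right end is followed by at least \<open>m\<close> further entries. Hence a permutation
  avoids it iff all but its last \<open>m\<close> entries are increasing, so an avoider is determined by
  the word formed by its last \<open>m\<close> entries, which can be any word of \<open>m\<close> distinct letters.
  For \<open>m = 2\<close> this gives \<open>n(n - 1)\<close> avoiders when \<open>n \<ge> 2\<close> (and all \<open>n!\<close> when
  \<open>n \<le> 3\<close>); the generating function then follows from
  \<open>\<Sum>\<^sub>n (n choose 2) x\<^sup>n = x\<^sup>2 / (1 - x)\<^sup>3\<close>.\<close>

lemma strict_mono_on_nat_add_le: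
  fixes f :: "nat \<Rightarrow> nat"
  assumes "strict_mono_on {a..b} f" and "a \<le> b"
  shows "f a + (b - a) \<le> f b"
  using assms(2,1)
proof (induction b rule: dec_induct)
  case (step b)
  have "f b < f (Suc b)"
    using step.prems step.hyps by (intro strict_mono_onD[OF step.prems]) auto
  moreover have "strict_mono_on {a..b} f"
    using step.prems by (rule monotone_on_subset) auto
  ultimately show ?case using step.IH step.hyps by simp
qed simp

lemma contains_pop_first_gt_second_iff:
  "contains_pop (m + 2) {(1, 2)} w \<longleftrightarrow> (\<exists>i j. i < j \<and> j + m < length w \<and> w ! j < w ! i)"
proof
  assume "contains_pop (m + 2) {(1, 2)} w"
  then obtain idx where mono: "strict_mono_on {1..m + 2} idx"
    and bounds: "\<forall>x\<in>{1..m + 2}. 1 \<le> idx x \<and> idx x \<le> length w"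
    and inv: "w ! (idx 2 - 1) < w ! (idx 1 - 1)"
    unfolding contains_pop_def by auto
  have "idx 1 < idx 2" using mono by (auto intro: strict_mono_onD)
  moreover have "idx 2 + m \<le> idx (m + 2)"
    using strict_mono_on_nat_add_le[of 2 "m + 2" idx] mono
    by (simp add: monotone_on_subset)
  moreover have "1 \<le> idx 1" "idx (m + 2) \<le> length w" using bounds by auto
  ultimately show "\<exists>i j. i < j \<and> j + m < length w \<and> w ! j < w ! i"
    using inv by (intro exI[of _ "idx 1 - 1"] exI[of _ "idx 2 - 1"]) auto
next
  assume "\<exists>i j. i < j \<and> j + m < length w \<and> w ! j < w ! i"
  then obtain i j where ij: "i < j" "j + m < length w" "w ! j < w ! i" by blast
  define idx where
    "idx x = (if x = 1 then i + 1 else if x = 2 then j + 1 else length w + x - (m + 2))" for x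
  have "strict_mono_on {1..m + 2} idx"
    using ij by (auto simp: strict_mono_on_def idx_def)
  moreover have "\<forall>x\<in>{1..m + 2}. 1 \<le> idx x \<and> idx x \<le> length w"
    using ij by (auto simp: idx_def)
  ultimately show "contains_pop (m + 2) {(1, 2)} w"
    using ij unfolding contains_pop_def by (intro exI[of _ idx]) (auto simp: idx_def)
qed

lemma not_contains_pop_first_gt_second_iff_sorted:
  "\<not> contains_pop (m + 2) {(1, 2)} w \<longleftrightarrow> sorted (take (length w - m) w)"
proof -
  have "sorted (take (length w - m) w) \<longleftrightarrow>
        (\<forall>i j. i < j \<longrightarrow> j + m < length w \<longrightarrow> w ! i \<le> w ! j)"
    by (auto simp: sorted_iff_nth_mono_less nth_take less_diff_conv)
  then show ?thesis
    unfolding contains_pop_first_gt_second_iff by (meson not_less)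
qed

lemma perms_eq_permutations_of_set: "perms n = permutations_of_set {1..n}"
  by (auto simp: perms_def permutations_of_set_def)

lemma length_perms: "w \<in> perms n \<Longrightarrow> length w = n"
  by (simp add: perms_eq_permutations_of_set length_finite_permutations_of_set)

lemma card_perms: "card (perms n) = fact n"
  by (simp add: perms_eq_permutations_of_set)

lemma avoiders_first_gt_second_eq_perms:
  assumes "n \<le> m + 1"
  shows "avoiders (m + 2) {(1, 2)} n = perms n"
proof -
  have "sorted (take (n - m) w)" for w :: "nat list"
    using assms by (intro sorted01) simp
  then show ?thesis
    unfolding avoiders_def not_contains_pop_first_gt_second_iff_sorted by (auto simp: length_perms)
qed

lemma card_avoiders_first_gt_second:
  assumes "m \<le> n"
  shows "card (avoiders (m + 2) {(1, 2)} n) = \<Prod>{n - m + 1..n}"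
proof -
  define tails where "tails = {ys. length ys = m \<and> distinct ys \<and> set ys \<subseteq> {1..n}}"
  define complete where "complete ys = sorted_list_of_set ({1..n} - set ys) @ ys" for ys
  have "inj_on complete tails"
    by (rule inj_on_inverseI[where g = "\<lambda>w. drop (length w - m) w"])
      (simp add: complete_def tails_def)
  moreover have "avoiders (m + 2) {(1, 2)} n = complete ` tails"
  proof (intro set_eqI iffI)
    fix w assume "w \<in> avoiders (m + 2) {(1, 2)} n"
    then have w: "w \<in> perms n" "sorted (take (n - m) w)"
      unfolding avoiders_def not_contains_pop_first_gt_second_iff_sorted by (auto simp: length_perms)
    define xs where "xs = take (n - m) w"
    define ys where "ys = drop (n - m) w"
    have "w = xs @ ys" by (simp add: xs_def ys_def)
    have "length ys = m"
      using assms w(1) by (simp add: ys_def length_perms)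
    moreover have "distinct (xs @ ys)" "set (xs @ ys) = {1..n}"
      using w(1) \<open>w = xs @ ys\<close> by (auto simp: perms_def)
    ultimately have "distinct xs" "set xs = {1..n} - set ys" "ys \<in> tails"
      by (auto simp: tails_def)
    moreover have "sorted xs"
      using w(2) by (simp add: xs_def)
    ultimately have "sorted_list_of_set ({1..n} - set ys) = xs"
      by (metis sorted_list_of_set.idem_if_sorted_distinct)
    then have "complete ys = w"
      by (simp add: complete_def \<open>w = xs @ ys\<close>)
    moreover note \<open>ys \<in> tails\<close>
    ultimately show "w \<in> complete ` tails" by blast
  next
    fix w assume "w \<in> complete ` tails"
    then obtain ys where ys: "length ys = m" "distinct ys" "set ys \<subseteq> {1..n}" and w: "w = complete ys"
      by (auto simp: tails_def)
    have "length (sorted_list_of_set ({1..n} - set ys)) = n - m"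
      using ys by (simp add: card_Diff_subset distinct_card)
    then show "w \<in> avoiders (m + 2) {(1, 2)} n"
      using ys unfolding avoiders_def not_contains_pop_first_gt_second_iff_sorted
      by (auto simp: w complete_def perms_def)
  qed
  moreover have "card tails = \<Prod>{n - m + 1..n}"
    using card_lists_distinct_length_eq[of "{1..n}" m] assms by (simp add: tails_def)
  ultimately show ?thesis by (simp add: card_image)
qed

lemma fps_choose_column:
  "Abs_fps (\<lambda>n. of_nat (n choose k) :: 'a :: field_char_0) = fps_X ^ k / (1 - fps_X) ^ (k + 1)"
proof -
  have "inverse ((1 - fps_X) ^ (k + 1) :: 'a fps) = Abs_fps (\<lambda>j. of_nat (k + j choose j))"
    using one_minus_const_fps_X_neg_power'[of "k + 1" "1 :: 'a"] by simp
  moreover have "n choose k = (if n < k then 0 else k + (n - k) choose (n - k))" for n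
    using binomial_symmetric[of k n] by simp
  ultimately show ?thesis
    by (intro fps_ext) (simp add: fps_divide_unit fps_X_power_mult_nth)
qed

lemma fps_of_quadratic_counts:
  fixes a :: "nat \<Rightarrow> nat"
  assumes "a 0 = 1" "a 1 = 1" "\<And>n. 2 \<le> n \<Longrightarrow> a n = n * (n - 1)"
  shows "Abs_fps (\<lambda>n. of_nat (a n) :: 'a :: field_char_0)
           = (1 - 2 * fps_X + 2 * fps_X ^ 2 + 2 * fps_X ^ 3 - fps_X ^ 4) / (1 - fps_X) ^ 3"
proof -
  have "a n = 2 * (n choose 2) + (if n \<le> 1 then 1 else 0)" for n
    using assms by (cases "n \<le> 1") (auto simp: choose_two le_Suc_eq)
  then have "Abs_fps (\<lambda>n. of_nat (a n) :: 'a) = 2 * Abs_fps (\<lambda>n. of_nat (n choose 2)) + (1 + fps_X)"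
    by (intro fps_ext) (simp add: numeral_fps_const fps_X_nth)
  also have "\<dots> = (2 * fps_X ^ 2 + (1 + fps_X) * (1 - fps_X) ^ 3) / (1 - fps_X) ^ 3"
    by (simp add: fps_choose_column fps_divide_unit distrib_right inverse_mult_eq_1' mult.assoc)
  also have "2 * fps_X ^ 2 + (1 + fps_X) * (1 - fps_X) ^ 3
               = (1 - 2 * fps_X + 2 * fps_X ^ 2 + 2 * fps_X ^ 3 - fps_X ^ 4 :: 'a fps)"
    by algebra
  finally show ?thesis .
qed

theorem theorem3p1:
  fixes a :: "nat \<Rightarrow> nat"
  defines "a \<equiv> \<lambda>n. card (avoiders 4 {(1, 2)} n)"
  shows "(\<forall>n\<in>{0, 1, 2, 3}. a n = fact n)
       \<and> (\<forall>n\<ge>4. a n = n * (n - 1))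
       \<and> Abs_fps (\<lambda>n. (of_nat (a n) :: rat))
           = (1 - 2 * fps_X + 2 * fps_X ^ 2 + 2 * fps_X ^ 3 - fps_X ^ 4) / (1 - fps_X) ^ 3"
proof -
  have small: "a n = fact n" if "n \<le> 3" for n
    using avoiders_first_gt_second_eq_perms[of n 2] that by (simp add: a_def card_perms)
  have large: "a n = n * (n - 1)" if "2 \<le> n" for n
  proof -
    have "{n - 2 + 1..n} = {n - 1, n}" using that by auto
    then show ?thesis
      using card_avoiders_first_gt_second[of 2 n] that by (simp add: a_def)
  qed
  have "a 0 = 1" "a 1 = 1" using small[of 0] small[of 1] by simp_all
  then have "Abs_fps (\<lambda>n. (of_nat (a n) :: rat))
      = (1 - 2 * fps_X + 2 * fps_X ^ 2 + 2 * fps_X ^ 3 - fps_X ^ 4) / (1 - fps_X) ^ 3"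
    using large by (rule fps_of_quadratic_counts)
  with small large show ?thesis by auto
qed

end
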